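(* Consider the following two-player game. Each player $i \in \{1,2\}$ privately knows her type $\theta_i$, her valuation of an indivisible object; types are drawn independently from a common absolutely continuous distribution $F$ with support $\Theta = (\underline{\theta}, \overline{\theta})$, $0 \le \underline{\theta} < \overline{\theta} \le \infty$, whose density $f$ is continuous and strictly positive on $(\underline{\theta}, \overline{\theta})$. Each player simultaneously chooses a stopping time $a_i \in [0,\infty]$; a (pure) strategy is a function $\sigma_i : \Theta \to [0,\infty]$. Payoffs are $u_i(a_i,a_{-i},\theta_i) = \theta_i - a_{-i}$ if $a_i > a_{-i}$, $\theta_i/2 - a_i$ if $a_i = a_{-i}$, and $-a_i$ if $a_i < a_{-i}$. Let $(\sigma_1,\sigma_2)$ be a Bayesian Nash equilibrium, and for $i\in\{1,2\}$ let $\overline{\theta}_i := \inf\{\theta \in \Theta : \sigma_i(\theta) = \infty\}$ (the lowest type of player $i$ that fights forever). Then at most one player has a positive mass of types choosing $\infty$, in the sense that $\max\{\overline{\theta}_1, \overline{\theta}_2\} = \overline{\theta}$.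
   Context: Equilibrium concept: Bayesian Nash equilibrium in pure strategies, each type maximizing expected payoff given the opponent's strategy and the prior $F$. The infimum of the empty set is taken to be $\overline{\theta}$. *)

theory Defs
  imports "HOL-Analysis.Analysis"
begin

definition typeset :: "real \<Rightarrow> ereal \<Rightarrow> real set" where
  "typeset lo hi = {\<theta>. lo < \<theta> \<and> ereal \<theta> < hi}"

definition prior :: "(real \<Rightarrow> real) \<Rightarrow> real \<Rightarrow> ereal \<Rightarrow> real measure" where
  "prior f lo hi = density lborel (\<lambda>x. ennreal (f x) * indicator (typeset lo hi) x)"

definition payoff :: "ereal \<Rightarrow> ereal \<Rightarrow> real \<Rightarrow> ereal" where
  "payoff a b \<theta> =
     (if b < a then ereal \<theta> - b
      else if a = b then ereal (\<theta> / 2) - a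
      else - a)"

text \<open>Expected payoff of a type \<theta> choosing action a when the opponent uses strategy \<sigma>
  and the opponent's type is drawn from M (positive part minus negative part; the
  positive part is always finite, the value may be -\<infinity>).\<close>
definition exp_payoff :: "real measure \<Rightarrow> (real \<Rightarrow> ereal) \<Rightarrow> ereal \<Rightarrow> real \<Rightarrow> ereal" where
  "exp_payoff M \<sigma> a \<theta> =
     enn2ereal (\<integral>\<^sup>+ x. e2ennreal (payoff a (\<sigma> x) \<theta>) \<partial>M)
     - enn2ereal (\<integral>\<^sup>+ x. e2ennreal (- payoff a (\<sigma> x) \<theta>) \<partial>M)"

definition best_response :: "real measure \<Rightarrow> real set \<Rightarrow> (real \<Rightarrow> ereal) \<Rightarrow> (real \<Rightarrow> ereal) \<Rightarrow> bool" where
  "best_response M \<Theta> \<sigma> \<tau> \<longleftrightarrow>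
     (\<forall>\<theta>\<in>\<Theta>. \<forall>a::ereal. 0 \<le> a \<longrightarrow> exp_payoff M \<tau> a \<theta> \<le> exp_payoff M \<tau> (\<sigma> \<theta>) \<theta>)"

definition strategy :: "real set \<Rightarrow> (real \<Rightarrow> ereal) \<Rightarrow> bool" where
  "strategy \<Theta> \<sigma> \<longleftrightarrow> (\<forall>\<theta>\<in>\<Theta>. 0 \<le> \<sigma> \<theta>) \<and> \<sigma> \<in> borel_measurable borel"

definition bayes_nash :: "(real \<Rightarrow> real) \<Rightarrow> real \<Rightarrow> ereal \<Rightarrow> (real \<Rightarrow> ereal) \<Rightarrow> (real \<Rightarrow> ereal) \<Rightarrow> bool" where
  "bayes_nash f lo hi \<sigma>1 \<sigma>2 \<longleftrightarrow>
     strategy (typeset lo hi) \<sigma>1 \<and> strategy (typeset lo hi) \<sigma>2 \<and>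
     best_response (prior f lo hi) (typeset lo hi) \<sigma>1 \<sigma>2 \<and>
     best_response (prior f lo hi) (typeset lo hi) \<sigma>2 \<sigma>1"

definition stop_thresh :: "real \<Rightarrow> ereal \<Rightarrow> (real \<Rightarrow> ereal) \<Rightarrow> ereal" where
  "stop_thresh lo hi \<sigma> =
     (if {\<theta>\<in>typeset lo hi. \<sigma> \<theta> = \<infinity>} = {} then hi
      else Inf (ereal ` {\<theta>\<in>typeset lo hi. \<sigma> \<theta> = \<infinity>}))"

end

theory Submission
  imports Defs "HOL-Probability.Probability_Measure"
begin

text \<open>
  Suppose type \<open>\<theta>\<^sub>1\<close> of player 1 and type \<open>\<theta>\<^sub>2\<close> of player 2 both fight forever.
  Fighting forever is then a best response for \<open>\<theta>\<^sub>1\<close>, so its expected payoff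
  \<open>\<theta>\<^sub>1 - E[\<sigma>\<^sub>2]\<close> is finite and player 2 stops almost surely.
  The payoff of stopping at a finite time \<open>a\<close> rises with the type by at most the
  rise of the payoff of fighting forever, and by exactly as much only against opponents
  stopping before \<open>a\<close>; hence every higher type of player 1 that stops at \<open>a\<close> faces an
  opponent stopping before \<open>a\<close> almost surely (single crossing).
  With \<open>m\<close> the infimum of the stopping times of the types of player 1 above \<open>\<theta>\<^sub>1\<close>,
  this gives \<open>\<sigma>\<^sub>2 \<le> m\<close> almost surely. Since every interval of types above \<open>\<theta>\<^sub>2\<close> has
  positive mass, some type of player 2 above \<open>\<theta>\<^sub>2\<close> stops at a time \<open>t \<le> m\<close>, and the
  same argument with the roles exchanged gives \<open>\<sigma>\<^sub>1 < t \<le> m\<close> almost surely, which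
  contradicts the choice of \<open>m\<close>.
\<close>

definition ereal_expectation :: "'a measure \<Rightarrow> ('a \<Rightarrow> ereal) \<Rightarrow> ereal" where
  "ereal_expectation M g =
     enn2ereal (\<integral>\<^sup>+ x. e2ennreal (g x) \<partial>M) - enn2ereal (\<integral>\<^sup>+ x. e2ennreal (- g x) \<partial>M)"

lemma exp_payoff_eq_ereal_expectation:
  "exp_payoff M \<tau> a \<theta> = ereal_expectation M (\<lambda>x. payoff a (\<tau> x) \<theta>)"
  unfolding exp_payoff_def ereal_expectation_def ..

lemma enn2ereal_eq_ereal_enn2real: "P \<noteq> \<infinity> \<Longrightarrow> enn2ereal P = ereal (enn2real P)"
  by (cases P rule: ennreal_cases) (auto simp: enn2ereal_ennreal)

lemma nn_integral_ennreal_neq_infinity: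
  fixes h :: "'a \<Rightarrow> real"
  assumes "integrable M h"
  shows "(\<integral>\<^sup>+ x. ennreal (h x) \<partial>M) \<noteq> \<infinity>"
proof -
  have "(\<integral>\<^sup>+ x. ennreal (h x) \<partial>M) \<le> (\<integral>\<^sup>+ x. ennreal (norm (h x)) \<partial>M)"
    by (intro nn_integral_mono) (auto intro: ennreal_leI)
  also have "\<dots> < \<infinity>"
    using assms by (simp add: integrable_iff_bounded)
  finally show ?thesis
    by simp
qed

lemma ereal_expectation_eq_integral:
  fixes h :: "'a \<Rightarrow> real"
  assumes "AE x in M. g x = ereal (h x)" and "integrable M h"
  shows "ereal_expectation M g = ereal (\<integral>x. h x \<partial>M)"
proof -
  have pos: "(\<integral>\<^sup>+ x. e2ennreal (g x) \<partial>M) = (\<integral>\<^sup>+ x. ennreal (h x) \<partial>M)"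
    and neg: "(\<integral>\<^sup>+ x. e2ennreal (- g x) \<partial>M) = (\<integral>\<^sup>+ x. ennreal (- h x) \<partial>M)"
    using assms(1) by (auto intro!: nn_integral_cong_AE simp: e2ennreal_ereal)
  have "integrable M (\<lambda>x. - h x)"
    using assms(2) by simp
  then show ?thesis
    unfolding ereal_expectation_def pos neg real_lebesgue_integral_def[OF assms(2)]
    using assms(2)
    by (simp add: enn2ereal_eq_ereal_enn2real[OF nn_integral_ennreal_neq_infinity])
qed

lemma e2ennreal_le_ennreal_abs: "x \<le> ereal c \<Longrightarrow> e2ennreal x \<le> ennreal \<bar>c\<bar>"
  by (metis abs_ge_self e2ennreal_ereal e2ennreal_mono ereal_less_eq(3) order_trans)

lemma ennreal_abs_eq_e2ennreal_add: "ennreal \<bar>r\<bar> = e2ennreal (ereal r) + e2ennreal (- ereal r)"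
  by (cases "0 \<le> r") (auto simp: e2ennreal_ereal ennreal_neg)

lemma (in finite_measure) ereal_expectation_neq_MInfty:
  assumes g_measurable: "g \<in> borel_measurable M" and bounded: "AE x in M. g x \<le> ereal c"
    and "ereal_expectation M g \<noteq> -\<infinity>"
  shows "AE x in M. g x \<noteq> -\<infinity>" and "integrable M (\<lambda>x. real_of_ereal (g x))"
proof -
  have "(\<integral>\<^sup>+ x. e2ennreal (g x) \<partial>M) \<le> (\<integral>\<^sup>+ x. ennreal \<bar>c\<bar> \<partial>M)"
    using bounded by (intro nn_integral_mono_AE) (auto elim: AE_mp intro: e2ennreal_le_ennreal_abs)
  also have "\<dots> < \<infinity>"
    by (simp add: ennreal_mult_eq_top_iff less_top[symmetric])
  finally have pos: "(\<integral>\<^sup>+ x. e2ennreal (g x) \<partial>M) \<noteq> \<infinity>"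
    by simp
  then have neg: "(\<integral>\<^sup>+ x. e2ennreal (- g x) \<partial>M) \<noteq> \<infinity>"
    using assms(3) by (auto simp: ereal_expectation_def enn2ereal_eq_ereal_enn2real)
  have "AE x in M. e2ennreal (g x) \<noteq> \<infinity>"
    using pos g_measurable by (intro nn_integral_PInf_AE) auto
  moreover have "AE x in M. e2ennreal (- g x) \<noteq> \<infinity>"
    using neg g_measurable by (intro nn_integral_PInf_AE) auto
  ultimately have finite: "AE x in M. \<bar>g x\<bar> \<noteq> \<infinity>"
    by eventually_elim auto
  then show "AE x in M. g x \<noteq> -\<infinity>"
    by eventually_elim auto
  from finite have "AE x in M. ennreal (norm (real_of_ereal (g x))) = e2ennreal (g x) + e2ennreal (- g x)"
    by eventually_elim (auto elim!: abs_neq_infinity_cases simp: ennreal_abs_eq_e2ennreal_add)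
  then have "(\<integral>\<^sup>+ x. ennreal (norm (real_of_ereal (g x))) \<partial>M)
      = (\<integral>\<^sup>+ x. e2ennreal (g x) + e2ennreal (- g x) \<partial>M)"
    by (rule nn_integral_cong_AE)
  also have "\<dots> = (\<integral>\<^sup>+ x. e2ennreal (g x) \<partial>M) + (\<integral>\<^sup>+ x. e2ennreal (- g x) \<partial>M)"
    using g_measurable by (intro nn_integral_add) auto
  also have "\<dots> < \<infinity>"
    using pos neg by (simp add: less_top)
  finally show "integrable M (\<lambda>x. real_of_ereal (g x))"
    using g_measurable by (intro integrableI_bounded) auto
qed

definition quit_payoff :: "real \<Rightarrow> ereal \<Rightarrow> real \<Rightarrow> real" where
  "quit_payoff a b \<theta> =
     (if b < ereal a then \<theta> - real_of_ereal b else if b = ereal a then \<theta> / 2 - a else - a)"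

lemma payoff_ereal: "0 \<le> b \<Longrightarrow> payoff (ereal a) b \<theta> = ereal (quit_payoff a b \<theta>)"
  unfolding payoff_def quit_payoff_def by (cases b) auto

lemma payoff_infinity: "0 \<le> b \<Longrightarrow> b \<noteq> \<infinity> \<Longrightarrow> payoff \<infinity> b \<theta> = ereal (\<theta> - real_of_ereal b)"
  unfolding payoff_def by (cases b) auto

lemma payoff_infinity_infinity: "payoff \<infinity> \<infinity> \<theta> = -\<infinity>"
  unfolding payoff_def by simp

lemma payoff_infinity_le: "0 \<le> b \<Longrightarrow> payoff \<infinity> b \<theta> \<le> ereal \<theta>"
  unfolding payoff_def by (cases b) auto

lemma borel_measurable_payoff [measurable]: "(\<lambda>b. payoff a b \<theta>) \<in> borel_measurable borel"
  unfolding payoff_def by measurable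

lemma borel_measurable_quit_payoff [measurable]: "(\<lambda>b. quit_payoff a b \<theta>) \<in> borel_measurable borel"
  unfolding quit_payoff_def by measurable

lemma abs_quit_payoff_le: "0 \<le> b \<Longrightarrow> \<bar>quit_payoff a b \<theta>\<bar> \<le> \<bar>\<theta>\<bar> + \<bar>a\<bar>"
  unfolding quit_payoff_def by (cases b) auto

lemma quit_payoff_increase_le: "\<theta> < \<theta>' \<Longrightarrow> quit_payoff a b \<theta>' - quit_payoff a b \<theta> \<le> \<theta>' - \<theta>"
  unfolding quit_payoff_def by auto

lemma quit_payoff_increase_eq_iff:
  "\<theta> < \<theta>' \<Longrightarrow> quit_payoff a b \<theta>' - quit_payoff a b \<theta> = \<theta>' - \<theta> \<longleftrightarrow> b < ereal a"
  unfolding quit_payoff_def by auto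

lemma AE_imp_exists_in:
  assumes "A \<in> sets M" and "emeasure M A \<noteq> 0" and "AE x in M. P x"
  shows "\<exists>x\<in>A. P x"
proof (rule ccontr)
  assume "\<not> (\<exists>x\<in>A. P x)"
  with assms(3) have "AE x in M. x \<notin> A"
    by (auto elim: AE_mp)
  moreover have "{x \<in> space M. \<not> x \<notin> A} = A"
    using sets.sets_into_space[OF assms(1)] by auto
  ultimately have "emeasure M A = 0"
    using AE_iff_measurable[OF assms(1)] by simp
  with assms(2) show False
    by simp
qed

lemma AE_le_Inf:
  fixes g :: "'a \<Rightarrow> 'b::{complete_linorder, linorder_topology, first_countable_topology}"
  assumes "\<And>a. a \<in> A \<Longrightarrow> AE x in M. g x < a"
  shows "AE x in M. g x \<le> Inf A"
proof (cases "A = {}")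
  case False
  then obtain u where u: "\<And>n. u n \<in> A" "u \<longlonglongrightarrow> Inf A"
    using Inf_as_limit by metis
  have "AE x in M. \<forall>n. g x < u n"
    using u(1) assms by (simp add: AE_all_countable)
  then show ?thesis
    by eventually_elim (rule LIMSEQ_le_const[OF u(2)], auto intro: less_imp_le)
qed simp

lemma stop_thresh_le: "stop_thresh lo hi \<sigma> \<le> hi"
proof (cases "{\<theta>\<in>typeset lo hi. \<sigma> \<theta> = \<infinity>} = {}")
  case False
  then obtain t where t: "t \<in> typeset lo hi" "\<sigma> t = \<infinity>"
    by auto
  then have "Inf (ereal ` {\<theta>\<in>typeset lo hi. \<sigma> \<theta> = \<infinity>}) \<le> ereal t"
    by (intro Inf_lower) auto
  also have "\<dots> < hi"
    using t by (simp add: typeset_def)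
  finally show ?thesis
    using False by (simp add: stop_thresh_def)
qed (simp add: stop_thresh_def)

locale common_prior = prob_space M for M :: "real measure" +
  fixes \<Theta> :: "real set"
  assumes sets_eq_borel: "sets M = sets borel"
    and AE_in_types: "AE x in M. x \<in> \<Theta>"
    and mass_above: "t \<in> \<Theta> \<Longrightarrow> emeasure M {t<..} \<noteq> 0"
begin

lemma strategy_measurable: "strategy \<Theta> \<tau> \<Longrightarrow> \<tau> \<in> borel_measurable M"
  by (simp add: strategy_def measurable_cong_sets[OF sets_eq_borel refl])

lemma AE_strategy_nonneg: "strategy \<Theta> \<tau> \<Longrightarrow> AE x in M. 0 \<le> \<tau> x"
  using AE_in_types by eventually_elim (auto simp: strategy_def)

lemma AE_imp_exists_above: "t \<in> \<Theta> \<Longrightarrow> AE x in M. P x \<Longrightarrow> \<exists>x\<in>\<Theta>. t < x \<and> P x"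
  using AE_imp_exists_in[of "{t<..}" M "\<lambda>x. x \<in> \<Theta> \<and> P x"] AE_in_types mass_above
  by (auto simp: sets_eq_borel)

lemma integrable_quit_payoff:
  assumes "strategy \<Theta> \<tau>"
  shows "integrable M (\<lambda>x. quit_payoff a (\<tau> x) \<theta>)"
proof (rule integrable_const_bound[where B="\<bar>\<theta>\<bar> + \<bar>a\<bar>"])
  show "AE x in M. norm (quit_payoff a (\<tau> x) \<theta>) \<le> \<bar>\<theta>\<bar> + \<bar>a\<bar>"
    using AE_strategy_nonneg[OF assms] by eventually_elim (simp add: abs_quit_payoff_le)
  show "(\<lambda>x. quit_payoff a (\<tau> x) \<theta>) \<in> borel_measurable M"
    using strategy_measurable[OF assms] by measurable
qed

lemma exp_payoff_ereal:
  assumes "strategy \<Theta> \<tau>"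
  shows "exp_payoff M \<tau> (ereal a) \<theta> = ereal (\<integral>x. quit_payoff a (\<tau> x) \<theta> \<partial>M)"
  unfolding exp_payoff_eq_ereal_expectation
proof (rule ereal_expectation_eq_integral)
  show "AE x in M. payoff (ereal a) (\<tau> x) \<theta> = ereal (quit_payoff a (\<tau> x) \<theta>)"
    using AE_strategy_nonneg[OF assms] by eventually_elim (simp add: payoff_ereal)
qed (rule integrable_quit_payoff[OF assms])

lemma exp_payoff_infinity_neq_MInfty:
  assumes "strategy \<Theta> \<tau>" and "exp_payoff M \<tau> \<infinity> \<theta> \<noteq> -\<infinity>"
  shows "AE x in M. \<tau> x \<noteq> \<infinity>" and "integrable M (\<lambda>x. real_of_ereal (\<tau> x))"
proof -
  note [measurable] = strategy_measurable[OF assms(1)]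
  have nonneg: "AE x in M. 0 \<le> \<tau> x"
    using assms(1) by (rule AE_strategy_nonneg)
  have "AE x in M. payoff \<infinity> (\<tau> x) \<theta> \<le> ereal \<theta>"
    using nonneg by eventually_elim (rule payoff_infinity_le)
  then have not_MInfty: "AE x in M. payoff \<infinity> (\<tau> x) \<theta> \<noteq> -\<infinity>"
    and integrable: "integrable M (\<lambda>x. real_of_ereal (payoff \<infinity> (\<tau> x) \<theta>))"
    using ereal_expectation_neq_MInfty[of "\<lambda>x. payoff \<infinity> (\<tau> x) \<theta>"] assms(2)
    by (auto simp: exp_payoff_eq_ereal_expectation)
  from not_MInfty show finite: "AE x in M. \<tau> x \<noteq> \<infinity>"
    by eventually_elim (auto simp: payoff_infinity_infinity)
  show "integrable M (\<lambda>x. real_of_ereal (\<tau> x))"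
  proof (rule integrable_cong_AE_imp)
    show "integrable M (\<lambda>x. \<theta> - real_of_ereal (payoff \<infinity> (\<tau> x) \<theta>))"
      using integrable by simp
    show "AE x in M. \<theta> - real_of_ereal (payoff \<infinity> (\<tau> x) \<theta>) = real_of_ereal (\<tau> x)"
      using finite nonneg by eventually_elim (simp add: payoff_infinity)
  qed measurable
qed

lemma exp_payoff_infinity:
  assumes "strategy \<Theta> \<tau>" and "AE x in M. \<tau> x \<noteq> \<infinity>"
    and integrable: "integrable M (\<lambda>x. real_of_ereal (\<tau> x))"
  shows "exp_payoff M \<tau> \<infinity> \<theta> = ereal (\<theta> - (\<integral>x. real_of_ereal (\<tau> x) \<partial>M))"
proof -
  have "exp_payoff M \<tau> \<infinity> \<theta> = ereal (\<integral>x. \<theta> - real_of_ereal (\<tau> x) \<partial>M)"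
    unfolding exp_payoff_eq_ereal_expectation
  proof (rule ereal_expectation_eq_integral)
    show "AE x in M. payoff \<infinity> (\<tau> x) \<theta> = ereal (\<theta> - real_of_ereal (\<tau> x))"
      using assms(2) AE_strategy_nonneg[OF assms(1)] by eventually_elim (simp add: payoff_infinity)
  qed (use integrable in simp)
  also have "(\<integral>x. \<theta> - real_of_ereal (\<tau> x) \<partial>M) = \<theta> - (\<integral>x. real_of_ereal (\<tau> x) \<partial>M)"
    using integrable by (simp add: prob_space)
  finally show ?thesis .
qed

lemma best_response_infinity_AE_finite:
  assumes "strategy \<Theta> \<tau>" and "best_response M \<Theta> \<sigma> \<tau>" and "\<theta> \<in> \<Theta>" and "\<sigma> \<theta> = \<infinity>"
  shows "AE x in M. \<tau> x \<noteq> \<infinity>" and "integrable M (\<lambda>x. real_of_ereal (\<tau> x))"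
proof -
  have "exp_payoff M \<tau> (ereal 0) \<theta> \<le> exp_payoff M \<tau> \<infinity> \<theta>"
    using assms(2-4) unfolding best_response_def by (metis zero_ereal_def order_refl)
  then have "exp_payoff M \<tau> \<infinity> \<theta> \<noteq> -\<infinity>"
    by (auto simp: exp_payoff_ereal[OF assms(1)])
  then show "AE x in M. \<tau> x \<noteq> \<infinity>" and "integrable M (\<lambda>x. real_of_ereal (\<tau> x))"
    using exp_payoff_infinity_neq_MInfty[OF assms(1)] by auto
qed

lemma best_response_infinity_AE_less:
  assumes \<tau>: "strategy \<Theta> \<tau>" and "strategy \<Theta> \<sigma>" and br: "best_response M \<Theta> \<sigma> \<tau>"
    and "\<theta> \<in> \<Theta>" and "\<sigma> \<theta> = \<infinity>" and "\<theta>' \<in> \<Theta>" and "\<theta> < \<theta>'" and "\<sigma> \<theta>' \<noteq> \<infinity>"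
  shows "AE x in M. \<tau> x < \<sigma> \<theta>'"
proof -
  obtain a where a: "\<sigma> \<theta>' = ereal a" "0 \<le> a"
    using assms(2,6,8) by (cases "\<sigma> \<theta>'") (auto simp: strategy_def)
  define E where "E = (\<integral>x. real_of_ereal (\<tau> x) \<partial>M)"
  define U where "U v = (\<integral>x. quit_payoff a (\<tau> x) v \<partial>M)" for v
  define slack where "slack x = (\<theta>' - \<theta>) - (quit_payoff a (\<tau> x) \<theta>' - quit_payoff a (\<tau> x) \<theta>)" for x
  have fight: "exp_payoff M \<tau> \<infinity> v = ereal (v - E)" for v
    unfolding E_def using best_response_infinity_AE_finite[OF \<tau> br assms(4,5)]
    by (intro exp_payoff_infinity[OF \<tau>])
  have quit: "exp_payoff M \<tau> (ereal a) v = ereal (U v)" for v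
    unfolding U_def by (rule exp_payoff_ereal[OF \<tau>])
  have deviation: "exp_payoff M \<tau> b v \<le> exp_payoff M \<tau> (\<sigma> v) v" if "v \<in> \<Theta>" "0 \<le> b" for v b
    using br that unfolding best_response_def by blast
  have "exp_payoff M \<tau> (ereal a) \<theta> \<le> exp_payoff M \<tau> \<infinity> \<theta>"
    using deviation[OF assms(4), of "ereal a"] assms(5) a(2) by simp
  moreover have "exp_payoff M \<tau> \<infinity> \<theta>' \<le> exp_payoff M \<tau> (ereal a) \<theta>'"
    using deviation[OF assms(6), of \<infinity>] a(1) by simp
  ultimately have "U \<theta> \<le> \<theta> - E" and "\<theta>' - E \<le> U \<theta>'"
    by (simp_all add: fight quit)
  moreover have integrable: "integrable M slack"
    unfolding slack_def using integrable_quit_payoff[OF \<tau>] by simp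
  moreover have "(\<integral>x. slack x \<partial>M) = (\<theta>' - \<theta>) - (U \<theta>' - U \<theta>)"
    unfolding slack_def U_def using integrable_quit_payoff[OF \<tau>] by (simp add: prob_space)
  moreover have nonneg: "AE x in M. 0 \<le> slack x"
    unfolding slack_def using quit_payoff_increase_le[OF assms(7)] by simp
  ultimately have "AE x in M. slack x = 0"
    using integral_nonneg_eq_0_iff_AE[OF integrable nonneg] integral_nonneg_AE[OF nonneg] by simp
  then show ?thesis
    by eventually_elim (use quit_payoff_increase_eq_iff[OF assms(7)] in \<open>force simp: slack_def a\<close>)
qed

lemma not_both_fight_forever:
  assumes \<sigma>\<^sub>1: "strategy \<Theta> \<sigma>\<^sub>1" and \<sigma>\<^sub>2: "strategy \<Theta> \<sigma>\<^sub>2"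
    and br\<^sub>1: "best_response M \<Theta> \<sigma>\<^sub>1 \<sigma>\<^sub>2" and br\<^sub>2: "best_response M \<Theta> \<sigma>\<^sub>2 \<sigma>\<^sub>1"
    and \<theta>\<^sub>1: "\<theta>\<^sub>1 \<in> \<Theta>" "\<sigma>\<^sub>1 \<theta>\<^sub>1 = \<infinity>" and \<theta>\<^sub>2: "\<theta>\<^sub>2 \<in> \<Theta>" "\<sigma>\<^sub>2 \<theta>\<^sub>2 = \<infinity>"
  shows False
proof -
  define m where "m = Inf (\<sigma>\<^sub>1 ` {s \<in> \<Theta>. \<theta>\<^sub>1 < s \<and> \<sigma>\<^sub>1 s \<noteq> \<infinity>})"
  have "AE x in M. \<sigma>\<^sub>2 x \<le> m"
    unfolding m_def using best_response_infinity_AE_less[OF \<sigma>\<^sub>2 \<sigma>\<^sub>1 br\<^sub>1 \<theta>\<^sub>1]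
    by (intro AE_le_Inf) auto
  moreover have "AE x in M. \<sigma>\<^sub>2 x \<noteq> \<infinity>"
    using best_response_infinity_AE_finite[OF \<sigma>\<^sub>2 br\<^sub>1 \<theta>\<^sub>1] by simp
  ultimately have "AE x in M. \<sigma>\<^sub>2 x \<le> m \<and> \<sigma>\<^sub>2 x \<noteq> \<infinity>"
    by eventually_elim simp
  then obtain t where t: "t \<in> \<Theta>" "\<theta>\<^sub>2 < t" "\<sigma>\<^sub>2 t \<le> m" "\<sigma>\<^sub>2 t \<noteq> \<infinity>"
    using AE_imp_exists_above[OF \<theta>\<^sub>2(1)] by blast
  have "AE x in M. \<sigma>\<^sub>1 x < \<sigma>\<^sub>2 t"
    using best_response_infinity_AE_less[OF \<sigma>\<^sub>1 \<sigma>\<^sub>2 br\<^sub>2 \<theta>\<^sub>2 t(1,2,4)] .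
  moreover have "AE x in M. \<sigma>\<^sub>1 x \<noteq> \<infinity>"
    using best_response_infinity_AE_finite[OF \<sigma>\<^sub>1 br\<^sub>2 \<theta>\<^sub>2] by simp
  ultimately have "AE x in M. \<sigma>\<^sub>1 x < \<sigma>\<^sub>2 t \<and> \<sigma>\<^sub>1 x \<noteq> \<infinity>"
    by eventually_elim simp
  then obtain s where s: "s \<in> \<Theta>" "\<theta>\<^sub>1 < s" "\<sigma>\<^sub>1 s < \<sigma>\<^sub>2 t" "\<sigma>\<^sub>1 s \<noteq> \<infinity>"
    using AE_imp_exists_above[OF \<theta>\<^sub>1(1)] by blast
  then have "m \<le> \<sigma>\<^sub>1 s"
    unfolding m_def by (auto intro: INF_lower)
  with s(3) t(3) show False
    by simp
qed

end

lemma typeset_open: "open (typeset lo hi)"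
  unfolding typeset_def by (intro open_Collect_conj open_Collect_less continuous_intros)

lemma borel_measurable_prior_density:
  assumes "continuous_on (typeset lo hi) f"
  shows "(\<lambda>x. ennreal (f x) * indicator (typeset lo hi) x) \<in> borel_measurable borel"
proof -
  have "(\<lambda>x. indicator (typeset lo hi) x *\<^sub>R f x) \<in> borel_measurable borel"
    using assms typeset_open by (intro borel_measurable_continuous_on_indicator) auto
  moreover have "(\<lambda>x. ennreal (f x) * indicator (typeset lo hi) x)
      = (\<lambda>x. ennreal (indicator (typeset lo hi) x *\<^sub>R f x))"
    by (auto simp: fun_eq_iff indicator_def)
  ultimately show ?thesis
    by simp
qed

lemma common_prior_prior:
  assumes "continuous_on (typeset lo hi) f"
    and positive: "\<forall>\<theta>\<in>typeset lo hi. 0 < f \<theta>"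
    and normalized: "(\<integral>\<^sup>+ x. ennreal (f x) * indicator (typeset lo hi) x \<partial>lborel) = 1"
  shows "common_prior (prior f lo hi) (typeset lo hi)"
proof -
  define g where "g x = ennreal (f x) * indicator (typeset lo hi) x" for x
  have g: "g \<in> borel_measurable borel"
    unfolding g_def using assms(1) by (rule borel_measurable_prior_density)
  have prior: "prior f lo hi = density lborel g"
    unfolding prior_def g_def ..
  have "prob_space (prior f lo hi)"
    using g normalized by (intro prob_spaceI) (simp add: prior emeasure_density g_def)
  moreover have "AE x in prior f lo hi. x \<in> typeset lo hi"
    unfolding prior using g by (subst AE_density) (auto simp: g_def indicator_def)
  moreover have "emeasure (prior f lo hi) {t<..} \<noteq> 0" if t: "t \<in> typeset lo hi" for t
  proof
    assume "emeasure (prior f lo hi) {t<..} = 0"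
    then have "AE x in prior f lo hi. x \<notin> {t<..}"
      by (intro AE_not_in) (simp add: null_sets_def prior)
    then have "AE x in lborel. 0 < g x \<longrightarrow> x \<le> t"
      unfolding prior using g by (subst (asm) AE_density) auto
    moreover obtain c where c: "t < c" "ereal c < hi"
      using t ereal_dense2[of "ereal t" hi] by (auto simp: typeset_def)
    moreover have "{t<..<c} \<in> sets lborel" and "emeasure lborel {t<..<c} \<noteq> 0"
      using c by auto
    ultimately obtain x where x: "x \<in> {t<..<c}" "0 < g x \<longrightarrow> x \<le> t"
      using AE_imp_exists_in[of "{t<..<c}" lborel] by blast
    then have "ereal x < hi"
      using c(2) by (metis greaterThanLessThan_iff less_ereal.simps(1) order.strict_trans)
    with x(1) t have "x \<in> typeset lo hi"
      by (simp add: typeset_def)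
    with x positive show False
      by (auto simp: g_def)
  qed
  moreover have "sets (prior f lo hi) = sets borel"
    by (simp add: prior)
  ultimately show ?thesis
    by (intro common_prior.intro common_prior_axioms.intro) auto
qed

theorem lemma4:
  fixes lo :: real and hi :: ereal and f :: "real \<Rightarrow> real"
    and \<sigma>1 \<sigma>2 :: "real \<Rightarrow> ereal"
  assumes "0 \<le> lo" and "ereal lo < hi"
    and "continuous_on (typeset lo hi) f"
    and "\<forall>\<theta>\<in>typeset lo hi. 0 < f \<theta>"
    and "(\<integral>\<^sup>+ x. ennreal (f x) * indicator (typeset lo hi) x \<partial>lborel) = 1"
    and "bayes_nash f lo hi \<sigma>1 \<sigma>2"
  shows "max (stop_thresh lo hi \<sigma>1) (stop_thresh lo hi \<sigma>2) = hi"
proof -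
  interpret common_prior "prior f lo hi" "typeset lo hi"
    using assms(3-5) by (rule common_prior_prior)
  have "{\<theta>\<in>typeset lo hi. \<sigma>1 \<theta> = \<infinity>} = {} \<or> {\<theta>\<in>typeset lo hi. \<sigma>2 \<theta> = \<infinity>} = {}"
    using not_both_fight_forever assms(6) unfolding bayes_nash_def by blast
  then have "stop_thresh lo hi \<sigma>1 = hi \<or> stop_thresh lo hi \<sigma>2 = hi"
    unfolding stop_thresh_def by auto
  then show ?thesis
    using stop_thresh_le[of lo hi \<sigma>1] stop_thresh_le[of lo hi \<sigma>2] by (auto simp: max_def)
qed

end
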